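(* Let $\nu$ be a fixed order, let $f\in C^{\infty}[a,b]$ where either $b>a>0$ or $a<b<0$, and let $\mathcal{H}_{\nu}[f]=\int_a^b f(x)J_{\nu}(\omega x)\,dx$ for $\omega>0$. Define $\sigma_0[f](x)=f(x)$ and $\sigma_k[f](x)=x^{\nu+k}\frac{d}{dx}\left[\frac{\sigma_{k-1}[f](x)}{x^{\nu+k}}\right]$ for $k\ge1$. Then, as $\omega\to\infty$, $$\mathcal{H}_{\nu}[f]\sim-\sum_{k=1}^{\infty}\frac{1}{(-\omega)^k}\Big\{\sigma_{k-1}[f](b)J_{\nu+k}(\omega b)-\sigma_{k-1}[f](a)J_{\nu+k}(\omega a)\Big\}.$$
   Context: $J_\nu$ is the Bessel function of the first kind of order $\nu$; $\sim$ denotes an asymptotic expansion as $\omega\to\infty$. *)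

theory Defs
  imports "HOL-Analysis.Analysis" "HOL-Library.Landau_Symbols"
begin

text \<open>The reciprocal Gamma function rGamma makes the formula valid for all real orders.\<close>
definition bessel_J :: "real \<Rightarrow> complex \<Rightarrow> complex" where
  "bessel_J \<nu> z = (z / 2) powr (complex_of_real \<nu>) *
     (\<Sum>m. (- ((z / 2) ^ 2)) ^ m / of_nat (fact m) * rGamma (of_nat m + complex_of_real \<nu> + 1))"

definition smooth_on_interval :: "(real \<Rightarrow> real) \<Rightarrow> real \<Rightarrow> real \<Rightarrow> bool" where
  "smooth_on_interval f a b \<longleftrightarrow>
     (\<exists>D. D 0 = f \<and>
        (\<forall>n. \<forall>x\<in>{a..b}. (D n has_real_derivative D (Suc n) x) (at x within {a..b})))"

fun sigma :: "real \<Rightarrow> (real \<Rightarrow> real) \<Rightarrow> real \<Rightarrow> real \<Rightarrow> nat \<Rightarrow> real \<Rightarrow> complex" where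
  "sigma \<nu> f a b 0 = (\<lambda>x. complex_of_real (f x))"
| "sigma \<nu> f a b (Suc k) = (\<lambda>x.
     (complex_of_real x) powr (complex_of_real (\<nu> + real (Suc k))) *
     vector_derivative
       (\<lambda>y. sigma \<nu> f a b k y / (complex_of_real y) powr (complex_of_real (\<nu> + real (Suc k))))
       (at x within {a..b}))"

definition hankel_type_integral :: "real \<Rightarrow> (real \<Rightarrow> real) \<Rightarrow> real \<Rightarrow> real \<Rightarrow> real \<Rightarrow> complex" where
  "hankel_type_integral \<nu> f a b \<omega> =
     integral {a..b} (\<lambda>x. complex_of_real (f x) * bessel_J \<nu> (complex_of_real (\<omega> * x)))"

end

theory Submission
  imports Defs
begin

text \<open>
  Put \<open>s = \<nu> + k\<close>. The Bessel identity \<open>(x\<^sup>s J\<^sub>s(\<omega> x))' = \<omega> x\<^sup>s J\<^sub>s\<^sub>-\<^sub>1(\<omega> x)\<close> and the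
  defining relation \<open>\<sigma>\<^sub>k = x\<^sup>s (\<sigma>\<^sub>k\<^sub>-\<^sub>1 / x\<^sup>s)'\<close> make an integration by parts of
  \<open>\<sigma>\<^sub>k\<^sub>-\<^sub>1 J\<^sub>s\<^sub>-\<^sub>1(\<omega> x) = (\<sigma>\<^sub>k\<^sub>-\<^sub>1 / x\<^sup>s) \<cdot> x\<^sup>s J\<^sub>s\<^sub>-\<^sub>1(\<omega> x)\<close> produce the \<open>k\<close>-th boundary
  term minus the next moment \<open>\<integral> \<sigma>\<^sub>k J\<^sub>s(\<omega> x) dx\<close>, divided by \<open>\<omega>\<close>. After \<open>N\<close> steps the
  remainder is \<open>\<omega>\<^sup>-\<^sup>N\<^sup>-\<^sup>1\<close> times boundary values of \<open>J\<^sub>\<nu>\<^sub>+\<^sub>N\<^sub>+\<^sub>1(\<omega> x)\<close> and its integral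
  against the continuous \<open>\<sigma>\<^sub>N\<^sub>+\<^sub>1\<close>, so it suffices that \<open>J\<^sub>\<mu>(t)\<close> stays bounded as
  \<open>t \<rightarrow> \<infinity>\<close>. For this, \<open>E(t) = t (J\<^sub>\<mu>\<^sup>2 + J\<^sub>\<mu>\<^sub>+\<^sub>1\<^sup>2) - (2\<mu>+1) J\<^sub>\<mu> J\<^sub>\<mu>\<^sub>+\<^sub>1\<close> dominates
  \<open>t J\<^sub>\<mu>\<^sup>2 / 2\<close>, and \<open>E(t) exp(|2\<mu>+1| / t)\<close> is nonincreasing for large \<open>t\<close>.
  On a negative interval the principal powers differ from real powers of \<open>|x|\<close> by constant
  phases, which cancel throughout.
\<close>

definition bessel_coeff :: "real \<Rightarrow> nat \<Rightarrow> real" where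
  "bessel_coeff \<mu> n = (-1)^n / fact n * rGamma (real n + \<mu> + 1)"

definition bessel_series :: "real \<Rightarrow> real \<Rightarrow> real" where
  "bessel_series \<mu> y = (\<Sum>n. bessel_coeff \<mu> n * y^n)"

definition bessel_real :: "real \<Rightarrow> real \<Rightarrow> real" where
  "bessel_real \<mu> t = (t/2) powr \<mu> * bessel_series \<mu> (t^2/4)"

lemma bessel_coeff_Suc: "bessel_coeff \<mu> (Suc n) * (real (Suc n) * (real n + \<mu> + 1)) = - bessel_coeff \<mu> n"
proof -
  have rG: "rGamma (real n + \<mu> + 1) = (real n + \<mu> + 1) * rGamma (real n + \<mu> + 1 + 1)"
    by (metis rGamma_plus1)
  have f: "real (Suc n) / fact (Suc n) = 1 / fact n"
    by (simp add: fact_Suc del: of_nat_Suc)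
  have "bessel_coeff \<mu> (Suc n) * (real (Suc n) * (real n + \<mu> + 1))
     = (real (Suc n) / fact (Suc n)) * ((-1)^Suc n * ((real n + \<mu> + 1) * rGamma (real n + \<mu> + 1 + 1)))"
    by (simp only: bessel_coeff_def add_ac mult_ac times_divide_eq_left times_divide_eq_right of_nat_Suc)
  also have "\<dots> = - bessel_coeff \<mu> n"
    unfolding f rG[symmetric] by (simp add: bessel_coeff_def)
  finally show ?thesis .
qed

lemma summable_bessel_coeff: "summable (\<lambda>n. bessel_coeff \<mu> n * y^n)"
proof (rule summable_ratio_test[where c="1/2" and N="nat \<lceil>2*\<bar>y\<bar> + \<bar>\<mu>\<bar> + 2\<rceil>"])
  fix n assume "nat \<lceil>2*\<bar>y\<bar> + \<bar>\<mu>\<bar> + 2\<rceil> \<le> n"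
  then have n: "real n \<ge> 2*\<bar>y\<bar> + \<bar>\<mu>\<bar> + 2" by linarith
  define q where "q = real (Suc n) * (real n + \<mu> + 1)"
  have "real (Suc n) * (real n + \<mu> + 1) \<ge> (2*\<bar>y\<bar> + 1) * 1"
    using n by (intro mult_mono) auto
  then have q: "q \<ge> 2*\<bar>y\<bar> + 1" by (simp add: q_def)
  have "bessel_coeff \<mu> (Suc n) = - bessel_coeff \<mu> n / q"
    using bessel_coeff_Suc[of \<mu> n] q by (simp add: q_def field_simps)
  then have "norm (bessel_coeff \<mu> (Suc n) * y ^ Suc n) = norm (bessel_coeff \<mu> n * y ^ n) * (\<bar>y\<bar> / q)"
    using q by (simp add: abs_mult power_abs abs_divide)
  also have "\<dots> \<le> norm (bessel_coeff \<mu> n * y ^ n) * (1/2)"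
    using q by (intro mult_left_mono) (auto simp: field_simps)
  finally show "norm (bessel_coeff \<mu> (Suc n) * y ^ Suc n) \<le> 1/2 * norm (bessel_coeff \<mu> n * y ^ n)"
    by simp
qed simp

lemma diffs_bessel_coeff: "diffs (bessel_coeff \<mu>) = (\<lambda>n. - bessel_coeff (\<mu>+1) n)"
proof
  fix n
  have f: "real (Suc n) / fact (Suc n) = 1 / fact n"
    by (simp add: fact_Suc del: of_nat_Suc)
  have "diffs (bessel_coeff \<mu>) n
      = (real (Suc n) / fact (Suc n)) * ((-1)^Suc n * rGamma (real n + (\<mu>+1) + 1))"
    by (simp add: diffs_def bessel_coeff_def algebra_simps)
  then show "diffs (bessel_coeff \<mu>) n = - bessel_coeff (\<mu>+1) n"
    unfolding f by (simp add: bessel_coeff_def)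
qed

lemma bessel_series_has_derivative:
  "(bessel_series \<mu> has_real_derivative - bessel_series (\<mu>+1) y) (at y)"
proof -
  have "((\<lambda>x. \<Sum>n. bessel_coeff \<mu> n * x^n) has_real_derivative
      (\<Sum>n. diffs (bessel_coeff \<mu>) n * y^n)) (at y)"
    by (rule termdiffs_strong_converges_everywhere) (rule summable_bessel_coeff)
  moreover have "(\<Sum>n. diffs (bessel_coeff \<mu>) n * y^n) = - bessel_series (\<mu>+1) y"
    unfolding diffs_bessel_coeff bessel_series_def using summable_bessel_coeff
    by (simp add: suminf_minus[symmetric])
  ultimately show ?thesis unfolding bessel_series_def[abs_def] by simp
qed

lemma bessel_series_recurrence:
  "s * bessel_series s y - y * bessel_series (s+1) y = bessel_series (s-1) y"
proof -
  define f where "f n = real n * bessel_coeff s n" for n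
  have "summable (\<lambda>n. diffs (bessel_coeff s) n * y^n)"
    by (rule termdiff_converges_all) (rule summable_bessel_coeff)
  then have "summable (\<lambda>n. f (Suc n) * y ^ Suc n)"
    using summable_mult2[of _ y] by (simp add: diffs_def f_def mult_ac)
  then have sf: "summable (\<lambda>n. f n * y^n)" by (subst summable_Suc_iff[symmetric])
  have "(\<lambda>n. f (Suc n) * y ^ n) = (\<lambda>n. - bessel_coeff (s+1) n * y^n)"
    using diffs_bessel_coeff[of s] by (auto simp: f_def diffs_def fun_eq_iff dest: fun_cong)
  then have "suminf (\<lambda>n. f (Suc n) * y ^ n) = - bessel_series (s+1) y"
    by (simp add: bessel_series_def suminf_minus[OF summable_bessel_coeff])
  then have "y * bessel_series (s+1) y = - suminf (\<lambda>n. f n * y ^ n)"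
    using powser_split_head(2)[OF sf] by (simp add: mult.commute f_def)
  then have "s * bessel_series s y - y * bessel_series (s+1) y
      = (\<Sum>n. s * (bessel_coeff s n * y^n)) + (\<Sum>n. f n * y^n)"
    by (simp add: bessel_series_def suminf_mult[OF summable_bessel_coeff])
  also have "\<dots> = (\<Sum>n. s * (bessel_coeff s n * y^n) + f n * y^n)"
    by (rule suminf_add) (use sf summable_mult[OF summable_bessel_coeff] in auto)
  also have "\<dots> = (\<Sum>n. bessel_coeff (s-1) n * y^n)"
  proof (rule suminf_cong)
    fix n
    have "(real n + s) * rGamma (real n + s + 1) = rGamma (real n + s)"
      by (rule rGamma_plus1)
    then have "bessel_coeff (s - 1) n = (real n + s) * bessel_coeff s n"
      by (simp add: bessel_coeff_def add_ac)
    then show "s * (bessel_coeff s n * y ^ n) + f n * y ^ n = bessel_coeff (s - 1) n * y ^ n"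
      by (simp add: f_def algebra_simps)
  qed
  finally show ?thesis by (simp add: bessel_series_def)
qed

lemma bessel_real_has_derivative:
  assumes t: "t > 0"
  shows "(bessel_real \<mu> has_real_derivative (\<mu>/t * bessel_real \<mu> t - bessel_real (\<mu>+1) t)) (at t)"
proof -
  have d1: "((\<lambda>t. (t/2) powr \<mu>) has_real_derivative \<mu> * (t/2) powr (\<mu> - 1) * (1/2)) (at t)"
    using DERIV_fun_powr[of "\<lambda>t. t/2" "1/2" t \<mu>] t by (auto intro!: derivative_eq_intros)
  have d2: "((\<lambda>t. bessel_series \<mu> (t^2/4)) has_real_derivative - bessel_series (\<mu>+1) (t^2/4) * (t/2)) (at t)"
    by (rule DERIV_chain2[OF bessel_series_has_derivative]) (auto intro!: derivative_eq_intros)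
  have p1: "(t/2) powr (\<mu> - 1) = (t/2) powr \<mu> / (t/2)"
    using t by (simp add: powr_diff)
  have p2: "(t/2) powr (\<mu> + 1) = (t/2) powr \<mu> * (t/2)"
    using t by (simp add: powr_add)
  have eq: "\<mu> * (t/2) powr (\<mu> - 1) * (1/2) * bessel_series \<mu> (t^2/4)
        + - bessel_series (\<mu>+1) (t^2/4) * (t/2) * (t/2) powr \<mu>
      = \<mu>/t * bessel_real \<mu> t - bessel_real (\<mu>+1) t"
    unfolding bessel_real_def p1 p2 using t by (simp add: field_simps)
  show ?thesis
    using DERIV_cong[OF DERIV_mult[OF d1 d2] eq] by (simp only: bessel_real_def[abs_def])
qed

lemma bessel_real_recurrence:
  assumes t: "t > 0"
  shows "bessel_real (s-1) t + bessel_real (s+1) t = 2 * s / t * bessel_real s t"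
proof -
  have p1: "(t/2) powr (s - 1) = (t/2) powr s / (t/2)"
    using t by (simp add: powr_diff)
  have p2: "(t/2) powr (s + 1) = (t/2) powr s * (t/2)"
    using t by (simp add: powr_add)
  have r: "bessel_series (s-1) (t^2/4) = s * bessel_series s (t^2/4) - t^2/4 * bessel_series (s+1) (t^2/4)"
    using bessel_series_recurrence[of s "t^2/4"] by simp
  show ?thesis
    unfolding bessel_real_def p1 p2 r using t by (simp add: field_simps power2_eq_square)
qed

lemma bessel_real_Suc_has_derivative:
  assumes t: "t > 0"
  shows "(bessel_real (\<mu>+1) has_real_derivative
           (bessel_real \<mu> t - (\<mu>+1)/t * bessel_real (\<mu>+1) t)) (at t)"
proof -
  have eq: "(\<mu>+1)/t * bessel_real (\<mu>+1) t - bessel_real (\<mu>+1+1) t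
      = bessel_real \<mu> t - (\<mu>+1)/t * bessel_real (\<mu>+1) t"
    using bessel_real_recurrence[OF t, of "\<mu>+1"] by (simp add: field_simps)
  show ?thesis by (rule DERIV_cong[OF bessel_real_has_derivative[OF t, of "\<mu>+1"] eq])
qed

definition bessel_energy :: "real \<Rightarrow> real \<Rightarrow> real" where
  "bessel_energy \<mu> t = t * ((bessel_real \<mu> t)^2 + (bessel_real (\<mu>+1) t)^2)
     - (2*\<mu>+1) * bessel_real \<mu> t * bessel_real (\<mu>+1) t"

lemma bessel_energy_has_derivative:
  assumes "t > 0"
  shows "(bessel_energy \<mu> has_real_derivative
           (2*\<mu>+1) * bessel_real \<mu> t * bessel_real (\<mu>+1) t / t) (at t)"
  unfolding bessel_energy_def[abs_def]
  by (rule DERIV_cong, (rule derivative_eq_intros bessel_real_has_derivative[OF assms]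
        bessel_real_Suc_has_derivative[OF assms] refl)+)
     (use assms in \<open>simp add: field_simps power2_eq_square\<close>)

lemma abs_mult_le_half_sum_squares:
  fixes c x y :: real
  shows "\<bar>c * x * y\<bar> \<le> \<bar>c\<bar> * ((x^2 + y^2) / 2)"
proof -
  have "\<bar>x * y\<bar> \<le> (x^2 + y^2) / 2"
    using sum_squares_bound[of "\<bar>x\<bar>" "\<bar>y\<bar>"] by (simp add: abs_mult power2_eq_square)
  then show ?thesis by (simp add: abs_mult mult.assoc mult_left_mono)
qed

lemma bessel_energy_lower_bound:
  assumes "t \<ge> \<bar>2*\<mu>+1\<bar>"
  shows "t/2 * ((bessel_real \<mu> t)^2 + (bessel_real (\<mu>+1) t)^2) \<le> bessel_energy \<mu> t"
proof -
  define S where "S = (bessel_real \<mu> t)^2 + (bessel_real (\<mu>+1) t)^2"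
  have "\<bar>(2*\<mu>+1) * bessel_real \<mu> t * bessel_real (\<mu>+1) t\<bar> \<le> \<bar>2*\<mu>+1\<bar> * (S/2)"
    unfolding S_def by (rule abs_mult_le_half_sum_squares)
  also have "\<dots> \<le> t * (S/2)"
    using assms by (intro mult_right_mono) (auto simp: S_def)
  finally show ?thesis unfolding bessel_energy_def S_def by linarith
qed

lemma bessel_energy_exp_decreasing:
  assumes c: "c = \<bar>2*\<mu>+1\<bar>" and T: "T > 0" "T \<ge> c" and t: "T \<le> t"
  shows "bessel_energy \<mu> t * exp (c/t) \<le> bessel_energy \<mu> T * exp (c/T)"
proof (rule DERIV_nonpos_imp_nonincreasing[OF t])
  fix x assume x: "T \<le> x" "x \<le> t"
  then have x0: "x > 0" and xc: "x \<ge> c" using T by auto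
  define P where "P = (2*\<mu>+1) * bessel_real \<mu> x * bessel_real (\<mu>+1) x"
  define S where "S = (bessel_real \<mu> x)^2 + (bessel_real (\<mu>+1) x)^2"
  have dex: "((\<lambda>t. c / t) has_real_derivative (- c / x^2)) (at x)"
    using x0 by (auto intro!: derivative_eq_intros simp: power2_eq_square)
  have D: "((\<lambda>t. bessel_energy \<mu> t * exp (c/t)) has_real_derivative
      (P / x - c * bessel_energy \<mu> x / x^2) * exp (c/x)) (at x)"
    by (rule DERIV_cong[OF DERIV_mult[OF bessel_energy_has_derivative[OF x0]
          DERIV_chain2[OF DERIV_exp dex]]]) (simp add: P_def algebra_simps)
  have PS: "\<bar>P\<bar> \<le> c * (S/2)"
    unfolding P_def S_def c by (rule abs_mult_le_half_sum_squares)
  have "P * (x + c) \<le> c * (S/2) * (2*x)"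
  proof -
    have "P * (x + c) \<le> \<bar>P\<bar> * (x + c)" using x0 c by (intro mult_right_mono) auto
    also have "\<dots> \<le> c * (S/2) * (x + c)" using PS x0 c by (intro mult_right_mono) auto
    also have "\<dots> \<le> c * (S/2) * (2*x)" using xc c by (intro mult_left_mono) (auto simp: S_def)
    finally show ?thesis .
  qed
  then have "P * x \<le> c * bessel_energy \<mu> x"
    by (simp add: bessel_energy_def P_def S_def algebra_simps)
  then have "(P / x - c * bessel_energy \<mu> x / x^2) * exp (c/x) \<le> 0"
    using x0 by (intro mult_nonpos_nonneg) (auto simp: field_simps power2_eq_square)
  with D show "\<exists>y. ((\<lambda>t. bessel_energy \<mu> t * exp (c/t)) has_real_derivative y) (at x) \<and> y \<le> 0"
    by blast
qed

lemma bessel_real_bounded_at_top: "\<exists>C T. T > 0 \<and> (\<forall>t\<ge>T. \<bar>bessel_real \<mu> t\<bar> \<le> C)"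
proof -
  define c where "c = \<bar>2*\<mu>+1\<bar>"
  define T where "T = max 1 c"
  have T: "T \<ge> 1" "T \<ge> c" and c0: "c \<ge> 0" by (auto simp: T_def c_def)
  have "(bessel_real \<mu> t)^2 \<le> 2 * (bessel_energy \<mu> T * exp (c/T))" if t: "t \<ge> T" for t
  proof -
    define S where "S = (bessel_real \<mu> t)^2 + (bessel_real (\<mu>+1) t)^2"
    have lower: "t/2 * S \<le> bessel_energy \<mu> t"
      unfolding S_def by (rule bessel_energy_lower_bound) (use t T c_def in auto)
    have E0: "0 \<le> bessel_energy \<mu> t"
      by (rule order_trans[OF _ lower]) (use t T in \<open>simp add: S_def\<close>)
    have "(bessel_real \<mu> t)^2 \<le> 1 * S" by (simp add: S_def)
    also have "\<dots> \<le> t * S" using t T by (intro mult_right_mono) (auto simp: S_def)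
    also have "\<dots> \<le> 2 * bessel_energy \<mu> t" using lower by simp
    also have "\<dots> \<le> 2 * (bessel_energy \<mu> t * exp (c/t))"
      using E0 t T c0 by (simp add: mult_le_cancel_left1)
    also have "\<dots> \<le> 2 * (bessel_energy \<mu> T * exp (c/T))"
      using bessel_energy_exp_decreasing[OF c_def _ T(2) t] T by simp
    finally show ?thesis .
  qed
  then have "\<bar>bessel_real \<mu> t\<bar> \<le> sqrt (2 * (bessel_energy \<mu> T * exp (c/T)))" if "t \<ge> T" for t
    using real_sqrt_le_mono[OF \<open>t \<ge> T \<Longrightarrow> _\<close>[OF that]] by simp
  then show ?thesis using T by (intro exI[of _ "sqrt _"] exI[of _ T]) auto
qed

lemma smooth_on_interval_continuous_on: "smooth_on_interval g a b \<Longrightarrow> continuous_on {a..b} g"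
  unfolding smooth_on_interval_def by (metis DERIV_continuous_on)

lemma smooth_on_interval_derivative:
  assumes "smooth_on_interval g a b"
  shows "\<exists>g'. (\<forall>x\<in>{a..b}. (g has_real_derivative g' x) (at x within {a..b})) \<and> smooth_on_interval g' a b"
proof -
  obtain D where D: "D 0 = g" "\<And>n x. x\<in>{a..b} \<Longrightarrow> (D n has_real_derivative D (Suc n) x) (at x within {a..b})"
    using assms unfolding smooth_on_interval_def by blast
  show ?thesis
    apply (rule exI[of _ "D 1"])
    using D unfolding smooth_on_interval_def
    by (auto intro!: exI[of _ "\<lambda>n. D (Suc n)"])
qed

lemma smooth_on_interval_add:
  assumes "smooth_on_interval g a b" "smooth_on_interval h a b"
  shows "smooth_on_interval (\<lambda>x. g x + h x) a b"
proof -
  obtain D where D: "D 0 = g" "\<And>n x. x\<in>{a..b} \<Longrightarrow> (D n has_real_derivative D (Suc n) x) (at x within {a..b})"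
    using assms unfolding smooth_on_interval_def by blast
  obtain E where E: "E 0 = h" "\<And>n x. x\<in>{a..b} \<Longrightarrow> (E n has_real_derivative E (Suc n) x) (at x within {a..b})"
    using assms unfolding smooth_on_interval_def by blast
  show ?thesis unfolding smooth_on_interval_def
    by (rule exI[of _ "\<lambda>n x. D n x + E n x"]) (auto simp: D E intro!: derivative_eq_intros)
qed

lemma smooth_on_interval_cmult:
  assumes "smooth_on_interval g a b"
  shows "smooth_on_interval (\<lambda>x. c * g x) a b"
proof -
  obtain D where D: "D 0 = g" "\<And>n x. x\<in>{a..b} \<Longrightarrow> (D n has_real_derivative D (Suc n) x) (at x within {a..b})"
    using assms unfolding smooth_on_interval_def by blast
  show ?thesis unfolding smooth_on_interval_def
    by (rule exI[of _ "\<lambda>n x. c * D n x"]) (auto simp: D intro!: derivative_eq_intros)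
qed

lemma Leibniz_sum_Suc:
  fixes p q :: "nat \<Rightarrow> real"
  shows "(\<Sum>i=0..n. real (n choose i) * (p (Suc i) * q (n-i) + p i * q (Suc (n-i))))
       = (\<Sum>i=0..Suc n. real (Suc n choose i) * p i * q (Suc n - i))"
proof -
  define T where "T = (\<Sum>i=0..Suc n. real (n choose i) * p i * q (Suc n - i))"
  have T1: "T = (\<Sum>i=0..n. real (n choose i) * p i * q (Suc (n - i)))"
    unfolding T_def by (simp add: Suc_diff_le)
  have T2: "T = p 0 * q (Suc n) + (\<Sum>i=0..n. real (n choose Suc i) * p (Suc i) * q (n - i))"
    unfolding T_def by (subst sum.atLeast0_atMost_Suc_shift) simp
  have "(\<Sum>i=0..Suc n. real (Suc n choose i) * p i * q (Suc n - i))
      = p 0 * q (Suc n) + (\<Sum>i=0..n. real (Suc n choose Suc i) * p (Suc i) * q (n - i))"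
    by (subst sum.atLeast0_atMost_Suc_shift) simp
  also have "\<dots> = p 0 * q (Suc n) + (\<Sum>i=0..n. real (n choose i) * p (Suc i) * q (n - i))
      + (\<Sum>i=0..n. real (n choose Suc i) * p (Suc i) * q (n - i))"
    by (simp add: sum.distrib algebra_simps)
  also have "\<dots> = (\<Sum>i=0..n. real (n choose i) * p (Suc i) * q (n - i)) + T"
    using T2 by simp
  also have "\<dots> = (\<Sum>i=0..n. real (n choose i) * (p (Suc i) * q (n-i) + p i * q (Suc (n-i))))"
    unfolding T1 by (simp add: sum.distrib algebra_simps)
  finally show ?thesis by simp
qed

lemma smooth_on_interval_mult:
  assumes "smooth_on_interval g a b" "smooth_on_interval h a b"
  shows "smooth_on_interval (\<lambda>x. g x * h x) a b"
proof -
  obtain D where D: "D 0 = g" "\<And>n x. x\<in>{a..b} \<Longrightarrow> (D n has_real_derivative D (Suc n) x) (at x within {a..b})"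
    using assms unfolding smooth_on_interval_def by blast
  obtain E where E: "E 0 = h" "\<And>n x. x\<in>{a..b} \<Longrightarrow> (E n has_real_derivative E (Suc n) x) (at x within {a..b})"
    using assms unfolding smooth_on_interval_def by blast
  define H where "H n x = (\<Sum>i=0..n. real (n choose i) * (D i x * E (n-i) x))" for n x
  have "(H n has_real_derivative H (Suc n) x) (at x within {a..b})" if x: "x \<in> {a..b}" for n x
  proof -
    have "(H n has_real_derivative
       (\<Sum>i=0..n. real (n choose i) * (D (Suc i) x * E (n-i) x + D i x * E (Suc (n-i)) x))) (at x within {a..b})"
      unfolding H_def[abs_def]
      by (rule DERIV_sum, rule DERIV_cong, rule DERIV_cmult[OF DERIV_mult[OF D(2)[OF x] E(2)[OF x]]])
         (simp add: algebra_simps)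
    then show ?thesis unfolding Leibniz_sum_Suc[where p="\<lambda>i. D i x" and q="\<lambda>i. E i x"] H_def
      by (simp add: mult.assoc)
  qed
  moreover have "H 0 = (\<lambda>x. g x * h x)" by (simp add: H_def D E fun_eq_iff)
  ultimately show ?thesis unfolding smooth_on_interval_def by blast
qed

lemma smooth_on_interval_inverse:
  assumes "0 \<notin> {a..b}"
  shows "smooth_on_interval (\<lambda>x. 1 / x) a b"
proof -
  define D where "D n x = (-1)^n * fact n / x^(Suc n)" for n and x :: real
  have "(D n has_real_derivative D (Suc n) x) (at x within {a..b})" if x: "x \<in> {a..b}" for n x
  proof -
    have xne: "x \<noteq> 0" using assms x by auto
    show ?thesis unfolding D_def[abs_def]
      by (rule DERIV_cong, (rule derivative_eq_intros refl | simp add: xne)+)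
  qed
  moreover have "D 0 = (\<lambda>x. 1 / x)" by (simp add: D_def fun_eq_iff)
  ultimately show ?thesis unfolding smooth_on_interval_def by blast
qed

definition branch_phase :: "real \<Rightarrow> real \<Rightarrow> complex" where
  "branch_phase \<sigma> \<mu> = (if \<sigma> > 0 then 1 else exp (\<i> * complex_of_real pi * complex_of_real \<mu>))"

lemma norm_branch_phase [simp]: "norm (branch_phase \<sigma> \<mu>) = 1"
  unfolding branch_phase_def by (simp add: norm_exp_eq_Re)

lemma branch_phase_nonzero [simp]: "branch_phase \<sigma> \<mu> \<noteq> 0"
  using norm_branch_phase[of \<sigma> \<mu>] by (metis norm_zero zero_neq_one)

lemma of_real_mult_branch_phase:
  assumes "\<sigma> = 1 \<or> \<sigma> = -1"
  shows "complex_of_real \<sigma> * branch_phase \<sigma> s = branch_phase \<sigma> (s - 1)"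
  using assms
proof
  assume "\<sigma> = -1"
  have "exp (\<i> * complex_of_real pi * complex_of_real (s - 1))
      = exp (\<i> * complex_of_real pi * complex_of_real s) * exp (- (\<i> * complex_of_real pi))"
    by (simp add: algebra_simps exp_diff exp_minus field_simps)
  then show ?thesis using \<open>\<sigma> = -1\<close> by (simp add: branch_phase_def exp_minus)
qed (simp add: branch_phase_def)

lemma of_real_powr_eq_branch_phase:
  assumes "\<sigma> = 1 \<or> \<sigma> = -1" "\<sigma> * x > 0"
  shows "complex_of_real x powr complex_of_real s = branch_phase \<sigma> s * complex_of_real ((\<sigma>*x) powr s)"
proof (cases "\<sigma> = 1")
  case False
  then have s: "\<sigma> = -1" using assms by simp
  then have "x < 0" using assms by simp
  then show ?thesis using s by (simp add: powr_of_neg_real branch_phase_def mult.commute)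
qed (use assms in \<open>simp add: branch_phase_def powr_of_real\<close>)

lemma bessel_J_series_of_real:
  "(\<Sum>m. (- ((complex_of_real u / 2) ^ 2)) ^ m / of_nat (fact m) * rGamma (of_nat m + complex_of_real \<mu> + 1))
    = complex_of_real (bessel_series \<mu> (u^2/4))"
proof -
  have "(- ((complex_of_real u / 2) ^ 2)) ^ m / of_nat (fact m) * rGamma (of_nat m + complex_of_real \<mu> + 1)
      = complex_of_real (bessel_coeff \<mu> m * (u^2/4)^m)" for m
  proof -
    have "rGamma (of_nat m + complex_of_real \<mu> + 1) = complex_of_real (rGamma (real m + \<mu> + 1))"
      by (simp flip: rGamma_complex_of_real)
    then show ?thesis
      by (simp add: bessel_coeff_def power_minus' power_divide field_simps power_mult_distrib)
  qed
  then show ?thesis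
    unfolding bessel_series_def by (simp add: suminf_of_real[OF summable_bessel_coeff])
qed

lemma bessel_J_eq_branch_phase:
  assumes "\<sigma> = 1 \<or> \<sigma> = -1" "\<sigma> * u > 0"
  shows "bessel_J \<mu> (complex_of_real u) = branch_phase \<sigma> \<mu> * complex_of_real (bessel_real \<mu> (\<sigma>*u))"
proof -
  have u2: "(\<sigma>*u)^2 = u^2" using assms(1) by (auto simp: power_mult_distrib)
  have "(complex_of_real u / 2) powr complex_of_real \<mu> = complex_of_real (u/2) powr complex_of_real \<mu>"
    by simp
  also have "\<dots> = branch_phase \<sigma> \<mu> * complex_of_real ((\<sigma>*(u/2)) powr \<mu>)"
    by (rule of_real_powr_eq_branch_phase) (use assms in auto)
  finally show ?thesis unfolding bessel_J_def bessel_J_series_of_real bessel_real_def u2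
    by (simp add: mult_ac)
qed

lemma powr_bessel_real_has_derivative:
  assumes \<omega>: "\<omega> > 0" and u: "u > 0"
  shows "((\<lambda>u. u powr s * bessel_real s (\<omega>*u)) has_real_derivative
           \<omega> * (u powr s * bessel_real (s-1) (\<omega>*u))) (at u)"
proof -
  have t: "\<omega>*u > 0" using \<omega> u by simp
  have dj: "((\<lambda>u. bessel_real s (\<omega>*u)) has_real_derivative
      (s/(\<omega>*u) * bessel_real s (\<omega>*u) - bessel_real (s+1) (\<omega>*u)) * \<omega>) (at u)"
    by (rule DERIV_chain2[where g="\<lambda>u. \<omega>*u", OF bessel_real_has_derivative[OF t]])
       (auto intro!: derivative_eq_intros)
  have rec: "bessel_real (s-1) (\<omega>*u) = 2 * s / (\<omega>*u) * bessel_real s (\<omega>*u) - bessel_real (s+1) (\<omega>*u)"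
    using bessel_real_recurrence[OF t, of s] by simp
  have p1: "u powr (s-1) = u powr s / u" using u by (simp add: powr_diff)
  show ?thesis
    by (rule DERIV_cong[OF DERIV_mult[OF has_real_derivative_powr[OF u] dj]])
       (use \<omega> u in \<open>simp add: rec p1 field_simps\<close>)
qed

lemma powr_bessel_J_has_vector_derivative:
  assumes \<sigma>: "\<sigma> = 1 \<or> \<sigma> = -1" and x: "\<sigma> * x > 0" and \<omega>: "\<omega> > 0"
  shows "((\<lambda>x. complex_of_real x powr complex_of_real s * bessel_J s (complex_of_real (\<omega>*x)))
     has_vector_derivative
       complex_of_real \<omega> * (complex_of_real x powr complex_of_real s * bessel_J (s-1) (complex_of_real (\<omega>*x))))
     (at x)"
proof -
  define P where "P = branch_phase \<sigma> s * branch_phase \<sigma> s"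
  define G where "G y = (\<sigma>*y) powr s * bessel_real s (\<omega>*(\<sigma>*y))" for y
  define G' where "G' = \<omega> * ((\<sigma>*x) powr s * bessel_real (s-1) (\<omega>*(\<sigma>*x))) * \<sigma>"
  define S where "S = {y. \<sigma> * y > 0}"
  have S: "open S" "x \<in> S"
    unfolding S_def using \<sigma> x by (auto intro!: open_Collect_less continuous_intros)
  have eq: "complex_of_real y powr complex_of_real s * bessel_J s (complex_of_real (\<omega>*y))
      = P * complex_of_real (G y)" if "y \<in> S" for y
  proof -
    have y: "\<sigma> * y > 0" using that by (simp add: S_def)
    then have "\<sigma> * (\<omega> * y) > 0" using \<omega> by (simp add: mult.left_commute)
    then show ?thesis
      using of_real_powr_eq_branch_phase[OF \<sigma> y, of s] bessel_J_eq_branch_phase[OF \<sigma>, of "\<omega>*y" s]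
      by (simp add: P_def G_def mult_ac)
  qed
  have "(G has_real_derivative G') (at x)"
    unfolding G_def G'_def
    by (rule DERIV_chain2[where g="\<lambda>y. \<sigma>*y", OF powr_bessel_real_has_derivative[OF \<omega> x]])
       (auto intro!: derivative_eq_intros)
  then have D: "((\<lambda>y. P * complex_of_real (G y)) has_vector_derivative P * complex_of_real G') (at x)"
    by (intro has_vector_derivative_mult_right has_vector_derivative_of_real)
  have E: "P * complex_of_real G'
      = complex_of_real \<omega> * (complex_of_real x powr complex_of_real s * bessel_J (s-1) (complex_of_real (\<omega>*x)))"
  proof -
    have "\<sigma> * (\<omega> * x) > 0" using x \<omega> by (simp add: mult.left_commute)
    then have "bessel_J (s-1) (complex_of_real (\<omega>*x))
        = branch_phase \<sigma> (s-1) * complex_of_real (bessel_real (s-1) (\<omega>*(\<sigma>*x)))"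
      using bessel_J_eq_branch_phase[OF \<sigma>, of "\<omega>*x" "s-1"] by (simp add: mult_ac)
    then show ?thesis
      unfolding P_def G'_def of_real_powr_eq_branch_phase[OF \<sigma> x] of_real_mult_branch_phase[OF \<sigma>, symmetric]
      by (simp add: mult_ac)
  qed
  show ?thesis
    by (rule has_vector_derivative_transform_within_open[OF D[unfolded E] S]) (metis eq)
qed

lemma powr_minus_Suc:
  fixes x :: real
  assumes "x > 0"
  shows "x powr (- (real n + 1)) = 1 / x ^ Suc n"
  using assms by (subst powr_minus) (simp add: powr_add powr_realpow divide_inverse)

definition bessel_moment :: "real \<Rightarrow> (real \<Rightarrow> real) \<Rightarrow> real \<Rightarrow> real \<Rightarrow> nat \<Rightarrow> real \<Rightarrow> complex" where
  "bessel_moment \<nu> f a b k \<omega> =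
     integral {a..b} (\<lambda>x. sigma \<nu> f a b k x * bessel_J (\<nu> + real k) (complex_of_real (\<omega>*x)))"

definition bessel_boundary_term :: "real \<Rightarrow> (real \<Rightarrow> real) \<Rightarrow> real \<Rightarrow> real \<Rightarrow> nat \<Rightarrow> real \<Rightarrow> complex" where
  "bessel_boundary_term \<nu> f a b k \<omega> =
     sigma \<nu> f a b k b * bessel_J (\<nu> + real (Suc k)) (complex_of_real (\<omega>*b))
     - sigma \<nu> f a b k a * bessel_J (\<nu> + real (Suc k)) (complex_of_real (\<omega>*a))"

definition hankel_asymptotic_sum :: "real \<Rightarrow> (real \<Rightarrow> real) \<Rightarrow> real \<Rightarrow> real \<Rightarrow> nat \<Rightarrow> real \<Rightarrow> complex" where
  "hankel_asymptotic_sum \<nu> f a b N \<omega> =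
     - (\<Sum>k=1..N. (1 / (- complex_of_real \<omega>) ^ k) *
          (sigma \<nu> f a b (k - 1) b * bessel_J (\<nu> + real k) (complex_of_real (\<omega> * b))
           - sigma \<nu> f a b (k - 1) a * bessel_J (\<nu> + real k) (complex_of_real (\<omega> * a))))"

locale signed_interval =
  fixes \<sigma> a b :: real
  assumes sign: "\<sigma> = 1 \<or> \<sigma> = -1" and less: "a < b"
    and sign_a: "\<sigma> * a > 0" and sign_b: "\<sigma> * b > 0"
begin

lemma sign_pos: "x \<in> {a..b} \<Longrightarrow> \<sigma> * x > 0"
  using sign sign_a sign_b by auto

lemma nonzero: "x \<in> {a..b} \<Longrightarrow> x \<noteq> 0"
  using sign_pos by fastforce

lemma sign_ge_min: "x \<in> {a..b} \<Longrightarrow> \<sigma> * x \<ge> min (\<sigma>*a) (\<sigma>*b)"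
  using sign by auto

lemma vector_derivative_within_interval:
  assumes "x \<in> {a..b}" "(h has_vector_derivative h') (at x within {a..b})"
  shows "vector_derivative h (at x within {a..b}) = h'"
  using vector_derivative_within_cbox[of a b x h h'] assms less by simp

lemma quotient_powr_has_vector_derivative:
  assumes g: "\<And>y. y \<in> {a..b} \<Longrightarrow> (g has_real_derivative g' y) (at y within {a..b})"
    and \<phi>: "\<And>y. y \<in> {a..b} \<Longrightarrow> \<phi> y = complex_of_real (g y)"
    and x: "x \<in> {a..b}"
  shows "((\<lambda>y. \<phi> y / complex_of_real y powr complex_of_real s) has_vector_derivative
     (complex_of_real ((g' x - s / x * g x) * (\<sigma>*x) powr (-s)) / branch_phase \<sigma> s)) (at x within {a..b})"
proof -
  have sx: "\<sigma> * x > 0" using sign_pos[OF x] .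
  have dp: "((\<lambda>y. (\<sigma>*y) powr (-s)) has_real_derivative (-s) * (\<sigma>*x) powr (-s - 1) * \<sigma>) (at x within {a..b})"
    using DERIV_fun_powr[of "\<lambda>y. \<sigma>*y" \<sigma> x "-s"] sx
    by (auto simp: has_field_derivative_at_within intro!: derivative_eq_intros)
  have "(\<sigma>*x) powr (-s - 1) = (\<sigma>*x) powr (-s) / (\<sigma>*x)" using sx by (simp add: powr_diff)
  moreover have "\<sigma> * \<sigma> = 1" using sign by auto
  ultimately have eq: "g x * ((-s) * (\<sigma>*x) powr (-s - 1) * \<sigma>) + g' x * (\<sigma>*x) powr (-s)
         = (g' x - s / x * g x) * (\<sigma>*x) powr (-s)"
    using sx by (simp add: field_simps)
  have "((\<lambda>y. g y * (\<sigma>*y) powr (-s)) has_real_derivative (g' x - s / x * g x) * (\<sigma>*x) powr (-s))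
      (at x within {a..b})"
    by (rule DERIV_cong[OF DERIV_mult[OF g[OF x] dp]]) (use eq in \<open>simp add: algebra_simps\<close>)
  then have d: "((\<lambda>y. complex_of_real (g y * (\<sigma>*y) powr (-s)) / branch_phase \<sigma> s) has_vector_derivative
     complex_of_real ((g' x - s / x * g x) * (\<sigma>*x) powr (-s)) / branch_phase \<sigma> s) (at x within {a..b})"
    unfolding divide_inverse by (intro has_vector_derivative_mult_left has_vector_derivative_of_real)
  show ?thesis
  proof (rule has_vector_derivative_transform[OF x _ d])
    fix y assume y: "y \<in> {a..b}"
    show "\<phi> y / complex_of_real y powr complex_of_real s
        = complex_of_real (g y * (\<sigma> * y) powr - s) / branch_phase \<sigma> s"
      using sign_pos[OF y] unfolding \<phi>[OF y] of_real_powr_eq_branch_phase[OF sign sign_pos[OF y]]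
      by (simp add: powr_minus field_simps)
  qed
qed

text \<open>On an interval avoiding \<open>0\<close> every \<open>\<sigma>\<^sub>k[f]\<close> is real and smooth: it satisfies the real
  recursion \<open>\<sigma>\<^sub>k = \<sigma>\<^sub>k\<^sub>-\<^sub>1' - (\<nu>+k)/x \<cdot> \<sigma>\<^sub>k\<^sub>-\<^sub>1\<close>, the branch phases cancelling.\<close>

lemma sigma_eq_of_real_smooth:
  assumes f: "smooth_on_interval f a b"
  shows "\<exists>g. smooth_on_interval g a b \<and> (\<forall>x\<in>{a..b}. sigma \<nu> f a b k x = complex_of_real (g x))"
proof (induction k)
  case 0
  then show ?case using f by auto
next
  case (Suc k)
  then obtain g where g: "smooth_on_interval g a b"
    "\<And>x. x\<in>{a..b} \<Longrightarrow> sigma \<nu> f a b k x = complex_of_real (g x)"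
    by blast
  obtain g' where g': "\<And>x. x\<in>{a..b} \<Longrightarrow> (g has_real_derivative g' x) (at x within {a..b})"
    "smooth_on_interval g' a b"
    using smooth_on_interval_derivative[OF g(1)] by blast
  define s where "s = \<nu> + real (Suc k)"
  have "sigma \<nu> f a b (Suc k) x = complex_of_real (g' x - s / x * g x)" if x: "x \<in> {a..b}" for x
  proof -
    have sx: "\<sigma> * x > 0" using sign_pos[OF x] .
    have vd: "vector_derivative (\<lambda>y. sigma \<nu> f a b k y / complex_of_real y powr complex_of_real s)
        (at x within {a..b})
       = complex_of_real ((g' x - s / x * g x) * (\<sigma>*x) powr (-s)) / branch_phase \<sigma> s"
      by (rule vector_derivative_within_interval[OF x quotient_powr_has_vector_derivative[OF g'(1) g(2) x]])
    have "(\<sigma>*x) powr s \<noteq> 0" using sx by (auto simp: powr_eq_0_iff)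
    then have "(\<sigma>*x) powr s * (\<sigma>*x) powr (-s) = 1" by (simp add: powr_minus)
    then show ?thesis
      unfolding sigma.simps s_def[symmetric] vd of_real_powr_eq_branch_phase[OF sign sx]
      by (simp add: field_simps flip: of_real_mult)
  qed
  moreover have "smooth_on_interval (\<lambda>x. g' x - s / x * g x) a b"
  proof -
    have "0 \<notin> {a..b}" using nonzero by blast
    then have "smooth_on_interval (\<lambda>x. g' x + (-s) * (1 / x * g x)) a b"
      by (intro smooth_on_interval_add smooth_on_interval_cmult smooth_on_interval_mult
          smooth_on_interval_inverse g'(2) g(1))
    then show ?thesis by (simp add: field_simps)
  qed
  ultimately show ?case by blast
qed

lemma sigma_quotient_has_vector_derivative:
  fixes \<nu> s :: real and k :: nat
  assumes f: "smooth_on_interval f a b" and x: "x \<in> {a..b}"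
  defines "h \<equiv> \<lambda>y. sigma \<nu> f a b k y / complex_of_real y powr complex_of_real s"
  shows "(h has_vector_derivative vector_derivative h (at x within {a..b})) (at x within {a..b})"
proof -
  obtain g where g: "smooth_on_interval g a b"
    "\<And>x. x\<in>{a..b} \<Longrightarrow> sigma \<nu> f a b k x = complex_of_real (g x)"
    using sigma_eq_of_real_smooth[OF f] by blast
  obtain g' where g': "\<And>x. x\<in>{a..b} \<Longrightarrow> (g has_real_derivative g' x) (at x within {a..b})"
    using smooth_on_interval_derivative[OF g(1)] by blast
  have d: "(h has_vector_derivative
      (complex_of_real ((g' x - s / x * g x) * (\<sigma>*x) powr (-s)) / branch_phase \<sigma> s)) (at x within {a..b})"
    unfolding h_def by (rule quotient_powr_has_vector_derivative[OF g' g(2) x])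
  show ?thesis by (subst vector_derivative_within_interval[OF x d]) (rule d)
qed

lemma continuous_on_sigma:
  assumes "smooth_on_interval f a b"
  shows "continuous_on {a..b} (sigma \<nu> f a b k)"
proof -
  obtain g where g: "smooth_on_interval g a b"
    "\<And>x. x\<in>{a..b} \<Longrightarrow> sigma \<nu> f a b k x = complex_of_real (g x)"
    using sigma_eq_of_real_smooth[OF assms] by blast
  have "continuous_on {a..b} (\<lambda>x. complex_of_real (g x))"
    using smooth_on_interval_continuous_on[OF g(1)] by (intro continuous_intros)
  then show ?thesis by (rule continuous_on_eq) (use g(2) in auto)
qed

lemma continuous_on_bessel_J:
  assumes "\<omega> > 0"
  shows "continuous_on {a..b} (\<lambda>x. bessel_J \<mu> (complex_of_real (\<omega>*x)))"
proof -
  have pos: "\<sigma> * (\<omega>*x) > 0" if "x \<in> {a..b}" for x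
    using sign_pos[OF that] assms by (simp add: mult.left_commute)
  have "isCont (\<lambda>x. bessel_real \<mu> (\<sigma>*(\<omega>*x))) x" if "x \<in> {a..b}" for x
    by (rule isCont_o2[where g="bessel_real \<mu>"])
       (auto intro!: continuous_intros DERIV_isCont[OF bessel_real_has_derivative[OF pos[OF that]]])
  then have "continuous_on {a..b} (\<lambda>x. branch_phase \<sigma> \<mu> * complex_of_real (bessel_real \<mu> (\<sigma>*(\<omega>*x))))"
    by (intro continuous_intros continuous_at_imp_continuous_on) auto
  then show ?thesis
    by (rule continuous_on_eq) (use bessel_J_eq_branch_phase[OF sign pos] in auto)
qed

lemma bessel_moment_integration_by_parts:
  assumes f: "smooth_on_interval f a b" and \<omega>: "\<omega> > 0"
  shows "bessel_moment \<nu> f a b k \<omega>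
    = (bessel_boundary_term \<nu> f a b k \<omega> - bessel_moment \<nu> f a b (Suc k) \<omega>) / complex_of_real \<omega>"
proof -
  define s where "s = \<nu> + real (Suc k)"
  define h where "h = (\<lambda>y. sigma \<nu> f a b k y / complex_of_real y powr complex_of_real s)"
  define h' where "h' = (\<lambda>x. vector_derivative h (at x within {a..b}))"
  define F where "F = (\<lambda>x. complex_of_real x powr complex_of_real s * bessel_J s (complex_of_real (\<omega>*x)))"
  define F' where "F' = (\<lambda>x. complex_of_real \<omega> *
      (complex_of_real x powr complex_of_real s * bessel_J (s-1) (complex_of_real (\<omega>*x))))"
  define Y where "Y = h b * F b - h a * F a - complex_of_real \<omega> * bessel_moment \<nu> f a b k \<omega>"
  have hd: "(h has_vector_derivative h' x) (at x within {a..b})" if "x \<in> {a..b}" for x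
    unfolding h_def h'_def by (rule sigma_quotient_has_vector_derivative[OF f that])
  have Fd: "(F has_vector_derivative F' x) (at x)" if "x \<in> {a..b}" for x
    unfolding F_def F'_def by (rule powr_bessel_J_has_vector_derivative[OF sign sign_pos[OF that] \<omega>])
  have hF': "h x * F' x = complex_of_real \<omega> *
      (sigma \<nu> f a b k x * bessel_J (\<nu> + real k) (complex_of_real (\<omega>*x)))" if "x \<in> {a..b}" for x
    using nonzero[OF that] unfolding h_def F'_def s_def by (simp add: field_simps)
  have "(\<lambda>x. sigma \<nu> f a b k x * bessel_J (\<nu> + real k) (complex_of_real (\<omega>*x))) integrable_on {a..b}"
    by (intro integrable_continuous_interval continuous_intros continuous_on_sigma[OF f]
        continuous_on_bessel_J[OF \<omega>])
  then have "((\<lambda>x. complex_of_real \<omega> * (sigma \<nu> f a b k x * bessel_J (\<nu> + real k) (complex_of_real (\<omega>*x))))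
      has_integral (h b * F b - h a * F a - Y)) {a..b}"
    unfolding Y_def bessel_moment_def by (simp add: has_integral_mult_right has_integral_integral)
  then have hF'_integral: "((\<lambda>x. h x * F' x) has_integral (h b * F b - h a * F a - Y)) {a..b}"
    by (rule has_integral_eq[rotated]) (simp add: hF')
  have "((\<lambda>x. h' x * F x) has_integral Y) {a..b}"
  proof (rule integration_by_parts_interior[OF bounded_bilinear_mult _ _ _ _ _ hF'_integral])
    show "continuous_on {a..b} h"
      using hd has_vector_derivative_continuous continuous_on_eq_continuous_within by blast
    show "continuous_on {a..b} F"
      using Fd has_vector_derivative_continuous continuous_at_imp_continuous_on by blast
    show "(h has_vector_derivative h' x) (at x)" if "x \<in> {a<..<b}" for x
      using hd[of x] that by (simp add: at_within_Icc_at)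
  qed (use less Fd in auto)
  moreover have "h' x * F x = sigma \<nu> f a b (Suc k) x * bessel_J (\<nu> + real (Suc k)) (complex_of_real (\<omega>*x))"
    for x unfolding h'_def F_def h_def s_def by (simp add: mult_ac)
  ultimately have "bessel_moment \<nu> f a b (Suc k) \<omega> = Y"
    unfolding bessel_moment_def by (simp add: integral_unique)
  moreover have "h b * F b - h a * F a = bessel_boundary_term \<nu> f a b k \<omega>"
    using nonzero[of a] nonzero[of b] less
    unfolding h_def F_def bessel_boundary_term_def s_def by simp
  ultimately show ?thesis unfolding Y_def using \<omega> by (simp add: field_simps)
qed

lemma hankel_remainder_eq_moment:
  assumes f: "smooth_on_interval f a b" and \<omega>: "\<omega> > 0"
  shows "hankel_type_integral \<nu> f a b \<omega> - hankel_asymptotic_sum \<nu> f a b N \<omega>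
     = bessel_moment \<nu> f a b N \<omega> / (- complex_of_real \<omega>) ^ N"
proof (induction N)
  case 0
  show ?case by (simp add: hankel_type_integral_def hankel_asymptotic_sum_def bessel_moment_def)
next
  case (Suc N)
  have "hankel_asymptotic_sum \<nu> f a b (Suc N) \<omega>
      = hankel_asymptotic_sum \<nu> f a b N \<omega> - bessel_boundary_term \<nu> f a b N \<omega> / (- complex_of_real \<omega>) ^ Suc N"
    by (simp add: hankel_asymptotic_sum_def bessel_boundary_term_def)
  with Suc.IH bessel_moment_integration_by_parts[OF f \<omega>, of \<nu> N] \<omega> show ?case
    by (simp add: field_simps)
qed

lemma norm_hankel_remainder:
  assumes f: "smooth_on_interval f a b" and \<omega>: "\<omega> > 0"
  shows "norm (hankel_type_integral \<nu> f a b \<omega> - hankel_asymptotic_sum \<nu> f a b N \<omega>)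
    = norm (bessel_boundary_term \<nu> f a b N \<omega> - bessel_moment \<nu> f a b (Suc N) \<omega>) / \<omega> ^ Suc N"
  unfolding hankel_remainder_eq_moment[OF f \<omega>] bessel_moment_integration_by_parts[OF f \<omega>, of \<nu> N]
  using \<omega> by (simp add: norm_divide norm_mult norm_power)

lemma bessel_J_bounded_at_top:
  obtains C where "\<forall>\<^sub>F \<omega> in at_top. \<forall>x\<in>{a..b}. norm (bessel_J \<mu> (complex_of_real (\<omega>*x))) \<le> C"
proof -
  define m where "m = min (\<sigma>*a) (\<sigma>*b)"
  have m: "m > 0" using sign_a sign_b by (simp add: m_def)
  obtain C T where T: "T > 0" and C: "\<And>t. t \<ge> T \<Longrightarrow> \<bar>bessel_real \<mu> t\<bar> \<le> C"
    using bessel_real_bounded_at_top[of \<mu>] by blast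
  have "norm (bessel_J \<mu> (complex_of_real (\<omega>*x))) \<le> C" if \<omega>: "\<omega> \<ge> T / m" and x: "x \<in> {a..b}" for \<omega> x
  proof -
    have "0 \<le> \<omega>" using \<omega> m T by (smt (verit) divide_pos_pos)
    have "T = T / m * m" using m by simp
    also have "\<dots> \<le> \<omega> * (\<sigma> * x)"
      using \<open>0 \<le> \<omega>\<close> \<omega> sign_ge_min[OF x] m T by (intro mult_mono) (auto simp: m_def)
    finally have "\<sigma> * (\<omega>*x) \<ge> T" by (simp add: mult_ac)
    then show ?thesis
      using bessel_J_eq_branch_phase[OF sign, of "\<omega>*x" \<mu>] C T by (simp add: norm_mult)
  qed
  then show thesis by (intro that eventually_at_top_linorderI[of "T / m"]) blast
qed

lemma boundary_term_minus_moment_bounded: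
  assumes f: "smooth_on_interval f a b"
  obtains K where "\<forall>\<^sub>F \<omega> in at_top.
    norm (bessel_boundary_term \<nu> f a b N \<omega> - bessel_moment \<nu> f a b (Suc N) \<omega>) \<le> K"
proof -
  define \<mu> where "\<mu> = \<nu> + real (Suc N)"
  obtain C where C: "\<forall>\<^sub>F \<omega> in at_top. \<forall>x\<in>{a..b}. norm (bessel_J \<mu> (complex_of_real (\<omega>*x))) \<le> C"
    by (rule bessel_J_bounded_at_top)
  obtain M1 where M1: "M1 \<ge> 0" "\<And>x. x \<in> {a..b} \<Longrightarrow> norm (sigma \<nu> f a b N x) \<le> M1"
    using continuous_on_compact_bound[OF compact_Icc continuous_on_sigma[OF f]] by blast
  obtain M2 where M2: "M2 \<ge> 0" "\<And>x. x \<in> {a..b} \<Longrightarrow> norm (sigma \<nu> f a b (Suc N) x) \<le> M2"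
    using continuous_on_compact_bound[OF compact_Icc continuous_on_sigma[OF f]] by blast
  have bound: "norm (bessel_boundary_term \<nu> f a b N \<omega> - bessel_moment \<nu> f a b (Suc N) \<omega>)
      \<le> 2 * (M1 * C) + M2 * C * (b - a)"
    if J: "\<forall>x\<in>{a..b}. norm (bessel_J \<mu> (complex_of_real (\<omega>*x))) \<le> C" and \<omega>: "\<omega> > 0" for \<omega>
  proof -
    have C0: "C \<ge> 0" using J less by (meson atLeastAtMost_iff norm_ge_zero order.trans order.refl less_imp_le)
    have "norm (sigma \<nu> f a b N x * bessel_J \<mu> (complex_of_real (\<omega>*x))) \<le> M1 * C" if "x \<in> {a..b}" for x
      unfolding norm_mult using M1 J that by (intro mult_mono) auto
    from this[of b] this[of a] less have "norm (bessel_boundary_term \<nu> f a b N \<omega>) \<le> M1 * C + M1 * C"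
      unfolding bessel_boundary_term_def \<mu>_def
      by (intro order.trans[OF norm_triangle_ineq4] add_mono) auto
    then have boundary: "norm (bessel_boundary_term \<nu> f a b N \<omega>) \<le> 2 * (M1 * C)" by linarith
    have moment: "((\<lambda>x. sigma \<nu> f a b (Suc N) x * bessel_J \<mu> (complex_of_real (\<omega>*x)))
        has_integral bessel_moment \<nu> f a b (Suc N) \<omega>) (cbox a b)"
      unfolding bessel_moment_def \<mu>_def cbox_interval
      by (intro integrable_integral integrable_continuous_interval continuous_intros
          continuous_on_sigma[OF f] continuous_on_bessel_J[OF \<omega>])
    have "norm (bessel_moment \<nu> f a b (Suc N) \<omega>) \<le> M2 * C * Henstock_Kurzweil_Integration.content (cbox a b)"
      by (rule has_integral_bound[OF _ moment]) (use M2 J C0 in \<open>auto simp: norm_mult intro!: mult_mono\<close>)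
    with less have "norm (bessel_moment \<nu> f a b (Suc N) \<omega>) \<le> M2 * C * (b - a)" by simp
    with boundary show ?thesis
      using norm_triangle_ineq4[of "bessel_boundary_term \<nu> f a b N \<omega>" "bessel_moment \<nu> f a b (Suc N) \<omega>"]
      by linarith
  qed
  have "\<forall>\<^sub>F \<omega> in at_top. norm (bessel_boundary_term \<nu> f a b N \<omega> - bessel_moment \<nu> f a b (Suc N) \<omega>)
      \<le> 2 * (M1 * C) + M2 * C * (b - a)"
    using C eventually_gt_at_top[of 0] by eventually_elim (metis bound)
  then show thesis by (rule that)
qed

end

theorem corollary2p2:
  fixes \<nu> a b :: real and f :: "real \<Rightarrow> real"
  assumes "(0 < a \<and> a < b) \<or> (a < b \<and> b < 0)"
    and "smooth_on_interval f a b"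
  shows "\<forall>N::nat.
    (\<lambda>\<omega>. hankel_type_integral \<nu> f a b \<omega>
       - (- (\<Sum>k=1..N. (1 / (- complex_of_real \<omega>) ^ k) *
              (sigma \<nu> f a b (k - 1) b * bessel_J (\<nu> + real k) (complex_of_real (\<omega> * b))
               - sigma \<nu> f a b (k - 1) a * bessel_J (\<nu> + real k) (complex_of_real (\<omega> * a))))))
    \<in> O[at_top](\<lambda>\<omega>. complex_of_real (\<omega> powr (- (real N + 1))))"
  unfolding hankel_asymptotic_sum_def[symmetric]
proof
  fix N :: nat
  have "signed_interval (if 0 < a then 1 else -1) a b"
    using assms(1) by unfold_locales auto
  then interpret signed_interval "if 0 < a then 1 else -1" a b .
  obtain K where K: "\<forall>\<^sub>F \<omega> in at_top.
      norm (bessel_boundary_term \<nu> f a b N \<omega> - bessel_moment \<nu> f a b (Suc N) \<omega>) \<le> K"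
    using boundary_term_minus_moment_bounded[OF assms(2)] .
  have "\<forall>\<^sub>F \<omega> in at_top. norm (hankel_type_integral \<nu> f a b \<omega> - hankel_asymptotic_sum \<nu> f a b N \<omega>)
      \<le> K * norm (complex_of_real (\<omega> powr (- (real N + 1))))"
    using K eventually_gt_at_top[of 0]
  proof eventually_elim
    case (elim \<omega>)
    then show ?case
      unfolding norm_hankel_remainder[OF assms(2) elim(2)] powr_minus_Suc[OF elim(2)]
      by (simp add: divide_right_mono norm_divide norm_mult norm_power)
  qed
  then show "(\<lambda>\<omega>. hankel_type_integral \<nu> f a b \<omega> - hankel_asymptotic_sum \<nu> f a b N \<omega>)
      \<in> O[at_top](\<lambda>\<omega>. complex_of_real (\<omega> powr (- (real N + 1))))"
    by (rule bigoI)
qed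

end
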